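(* There is an absolute constant $C>0$ such that for every odd $n\ge3$ and every $\epsilon\in(0,1)$, the mixing time of the Hadamard-coined quantum walk on the $n$-cycle satisfies \[M_\epsilon\le C\,\frac{n(1+\log n)}{\epsilon^3}.\]
   Context: Hadamard-coined quantum walk on the $n$-cycle: $\mathcal H=\mathbb C^2\otimes\mathbb C^n$ with basis $|a,i\rangle$, $a\in\{R,L\}$, $i\in\mathbb Z_n$; $U=S\cdot(H\otimes I)$ with $H=\frac1{\sqrt2}\begin{pmatrix}1&1\\1&-1\end{pmatrix}$, $S|R,i\rangle=|R,i+1\bmod n\rangle$, $S|L,i\rangle=|L,i-1\bmod n\rangle$. $P_t(\cdot|a,i)$ is the distribution on $\mathbb Z_n$ of the vertex of $U^t|a,i\rangle$, $\bar P_T=\frac1T\sum_{t=0}^{T-1}P_t$, $\pi(\cdot|a,i)=\lim_T\bar P_T(\cdot|a,i)$ (which is uniform). Total variation $\|d_1-d_2\|=\sum_j|d_1(j)-d_2(j)|$. Mixing time $M_\epsilon=\min\{T\ge1:\forall t\ge T,\forall$ basis states $|a,i\rangle:\ \|\pi(\cdot|a,i)-\bar P_t(\cdot|a,i)\|\le\epsilon\}$. *)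

theory Defs
  imports "HOL-Analysis.Analysis"
begin

text \<open>Hadamard walk on the n-cycle. A state is a function
  bool => nat => complex, where True encodes coin state R and False encodes L,
  and vertices are 0..n-1 (indices outside are irrelevant).\<close>

type_synonym qstate = "bool \<Rightarrow> nat \<Rightarrow> complex"

text \<open>U = S (H \<otimes> I).  H|R> = (|R>+|L>)/sqrt 2, H|L> = (|R>-|L>)/sqrt 2;
  S|R,i> = |R,i+1 mod n>, S|L,i> = |L,i-1 mod n>.\<close>

definition walk_step :: "nat \<Rightarrow> qstate \<Rightarrow> qstate" where
  "walk_step n psi = (\<lambda>a j.
     if a then (psi True ((j + n - 1) mod n) + psi False ((j + n - 1) mod n)) / complex_of_real (sqrt 2)
     else (psi True ((j + 1) mod n) - psi False ((j + 1) mod n)) / complex_of_real (sqrt 2))"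

definition basis_state :: "bool \<Rightarrow> nat \<Rightarrow> qstate" where
  "basis_state a i = (\<lambda>b j. if b = a \<and> j = i then 1 else 0)"

definition walk_state :: "nat \<Rightarrow> bool \<Rightarrow> nat \<Rightarrow> nat \<Rightarrow> qstate" where
  "walk_state n a i t = (walk_step n ^^ t) (basis_state a i)"

definition walk_prob :: "nat \<Rightarrow> bool \<Rightarrow> nat \<Rightarrow> nat \<Rightarrow> nat \<Rightarrow> real" where
  "walk_prob n a i t j = (cmod (walk_state n a i t True j))\<^sup>2 + (cmod (walk_state n a i t False j))\<^sup>2"

definition avg_prob :: "nat \<Rightarrow> bool \<Rightarrow> nat \<Rightarrow> nat \<Rightarrow> nat \<Rightarrow> real" where
  "avg_prob n a i T j = (\<Sum>t<T. walk_prob n a i t j) / real T"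

definition lim_dist :: "nat \<Rightarrow> bool \<Rightarrow> nat \<Rightarrow> nat \<Rightarrow> real" where
  "lim_dist n a i j = lim (\<lambda>T. avg_prob n a i T j)"

text \<open>total variation (without the factor 1/2): sum_j |d1 j - d2 j|\<close>
definition tv_dist :: "nat \<Rightarrow> (nat \<Rightarrow> real) \<Rightarrow> (nat \<Rightarrow> real) \<Rightarrow> real" where
  "tv_dist n d1 d2 = (\<Sum>j<n. \<bar>d1 j - d2 j\<bar>)"

definition mixes :: "nat \<Rightarrow> real \<Rightarrow> nat \<Rightarrow> bool" where
  "mixes n \<epsilon> T \<longleftrightarrow> (\<forall>t\<ge>T. \<forall>a. \<forall>i<n.
      tv_dist n (lim_dist n a i) (avg_prob n a i t) \<le> \<epsilon>)"

definition mixing_time :: "nat \<Rightarrow> real \<Rightarrow> nat" where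
  "mixing_time n \<epsilon> = (LEAST T. T \<ge> 1 \<and> mixes n \<epsilon> T)"

end

theory Submission
  imports Defs
begin

(* The discrete Fourier transform in the vertex variable decouples the walk:
   the k-th Fourier mode evolves by a unitary 2 x 2 coin matrix with eigenvalues
   lambda_k^+- = +-rho_k - i sin(2 pi k / n) / sqrt 2.  Hence P_t(j) is a double Fourier sum,
   over modes k and k', of the powers (lambda_k^s conj lambda_k'^s')^t.  Cesaro
   averaging keeps the diagonal terms, which do not depend on j and so give the
   uniform limit, and damps every other term by 2 / (T |lambda_k^s - lambda_k'^s'|).
   Eigenvalues of different sign are at distance at least 1.  Eigenvalues of equal
   sign differ by at least |sin(2 pi k/n) - sin(2 pi k'/n)| / sqrt 2, and the sine
   difference formula with |sin x| >= dist(x, pi Z) / 3 bounds this from below by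
   min(d, n - d) |r_k| / n^2, where d = k - k' and, n being odd, k |-> r_k is an
   injective map into the nonzero integers of [-n, n].  So for each shift d the
   reciprocal gaps add up to a harmonic sum, O(n^2 log n / min(d, n - d)), and
   Parseval's identity in the vertex variable with Cauchy-Schwarz bounds the total
   variation by O(n log n / T).  This gives M_eps = O(n log n / eps), which is
   stronger than the claim. *)

lemma harm_le_1_plus_ln: "1 \<le> n \<Longrightarrow> (harm n :: real) \<le> 1 + ln (real n)"
  using euler_mascheroni_sequence_decreasing[of 1 n] by (simp add: harm_def)

lemma sum_inverse_pos_inj_le_harm:
  fixes g :: "'a \<Rightarrow> int"
  assumes inj: "inj_on g P" and "finite P" and range: "\<And>k. k \<in> P \<Longrightarrow> 0 < g k \<and> g k \<le> int N"
  shows "(\<Sum>k\<in>P. 1 / real_of_int (g k)) \<le> harm N"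
proof -
  have "inj_on (\<lambda>k. nat (g k)) P"
    using inj range by (auto simp: inj_on_def eq_nat_nat_iff less_imp_le)
  then have "(\<Sum>k\<in>P. 1 / real_of_int (g k)) = (\<Sum>m\<in>(\<lambda>k. nat (g k)) ` P. 1 / real m)"
    using range by (simp add: sum.reindex less_imp_le cong: sum.cong)
  also have "\<dots> \<le> (\<Sum>m\<in>{1..N}. 1 / real m)"
    using range by (intro sum_mono2) force+
  finally show ?thesis
    by (simp add: harm_def divide_inverse)
qed

lemma sum_inverse_abs_inj_le_2_harm:
  fixes g :: "'a \<Rightarrow> int"
  assumes inj: "inj_on g A" and "finite A" and range: "\<And>k. k \<in> A \<Longrightarrow> g k \<noteq> 0 \<and> \<bar>g k\<bar> \<le> int N"
  shows "(\<Sum>k\<in>A. 1 / \<bar>real_of_int (g k)\<bar>) \<le> 2 * harm N"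
proof -
  define P Q where "P = {k \<in> A. 0 < g k}" and "Q = {k \<in> A. g k < 0}"
  have "A = P \<union> Q" "P \<inter> Q = {}"
    using range by (auto simp: P_def Q_def) (meson linorder_neqE)
  moreover have "finite P" "finite Q"
    using \<open>finite A\<close> by (simp_all add: P_def Q_def)
  moreover have "(\<Sum>k\<in>P. 1 / \<bar>real_of_int (g k)\<bar>) \<le> harm N"
  proof -
    have "(\<Sum>k\<in>P. 1 / real_of_int (g k)) \<le> harm N"
      using inj range \<open>finite P\<close>
      by (intro sum_inverse_pos_inj_le_harm) (auto simp: P_def abs_le_iff intro: inj_on_subset)
    then show ?thesis
      by (simp add: P_def)
  qed
  moreover have "(\<Sum>k\<in>Q. 1 / \<bar>real_of_int (g k)\<bar>) \<le> harm N"
  proof -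
    have "(\<Sum>k\<in>Q. 1 / real_of_int (- g k)) \<le> harm N"
      using inj range \<open>finite Q\<close>
      by (intro sum_inverse_pos_inj_le_harm) (auto simp: Q_def inj_on_def abs_le_iff)
    then show ?thesis
      by (simp add: Q_def)
  qed
  ultimately show ?thesis
    by (simp add: sum.union_disjoint)
qed

lemma sum_inverse_squares_le: "1 \<le> N \<Longrightarrow> (\<Sum>d\<in>{1..N}. 1 / (real d)\<^sup>2) \<le> 2 - 1 / real N"
proof (induction N rule: nat_induct_at_least)
  case (Suc N)
  have "1 / (real (Suc N))\<^sup>2 \<le> 1 / (real N * real (Suc N))"
    using Suc.hyps by (intro frac_le) (auto simp: power2_eq_square)
  also have "\<dots> = 1 / real N - 1 / real (Suc N)"
    using Suc.hyps by (simp add: field_simps)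
  finally show ?case using Suc.IH by simp
qed simp

lemma sin_ge_third:
  fixes x :: real
  assumes "0 \<le> x" "x \<le> 2"
  shows "x / 3 \<le> sin x"
proof -
  have "\<bar>sin x - (\<Sum>m<3. sin_coeff m * x ^ m)\<bar> \<le> inverse (fact 3) * \<bar>x\<bar> ^ 3"
    by (rule Maclaurin_sin_bound)
  moreover have "(\<Sum>m<3. sin_coeff m * x ^ m) = x"
    by (simp add: eval_nat_numeral sin_coeff_def)
  moreover have "inverse (fact 3) * \<bar>x\<bar> ^ 3 = x ^ 3 / 6"
    using assms by (simp add: fact_numeral field_simps)
  ultimately have "\<bar>sin x - x\<bar> \<le> x ^ 3 / 6" by simp
  then have "x - x ^ 3 / 6 \<le> sin x"
    using abs_le_iff[of "sin x - x"] by linarith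
  moreover have "x ^ 3 \<le> 4 * x"
    using assms mult_right_mono[of "x\<^sup>2" 4 x] power_mono[of x 2 2]
    by (simp add: power3_eq_cube power2_eq_square)
  ultimately show ?thesis by simp
qed

lemma abs_sin_ge_dist_div_3:
  assumes "\<bar>y - of_int l * pi\<bar> \<le> 2"
  shows "\<bar>y - of_int l * pi\<bar> / 3 \<le> \<bar>sin y\<bar>"
proof -
  define x where "x = y - of_int l * pi"
  have "\<bar>sin y\<bar> = \<bar>sin x\<bar>"
    by (simp add: x_def sin_diff mult.commute[of _ pi])
  moreover have "\<bar>x\<bar> \<le> 2" using assms by (simp add: x_def)
  then have "\<bar>x\<bar> / 3 \<le> \<bar>sin x\<bar>"
    using sin_ge_third[of x] sin_ge_third[of "- x"] by (cases "0 \<le> x") auto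
  ultimately show ?thesis by (simp add: x_def)
qed

definition geom_avg :: "nat \<Rightarrow> 'a::real_normed_field \<Rightarrow> 'a" where
  "geom_avg T x = (\<Sum>t<T. x ^ t) / of_nat T"

lemma geom_avg_1: "1 \<le> T \<Longrightarrow> geom_avg T 1 = 1"
  by (simp add: geom_avg_def)

lemma norm_geom_avg_le:
  fixes x :: "'a::real_normed_field"
  assumes "norm x = 1" "x \<noteq> 1" "1 \<le> T"
  shows "norm (geom_avg T x) \<le> 2 / (real T * norm (1 - x))"
proof -
  have "norm (1 - x ^ T) \<le> 2"
    using norm_triangle_ineq4[of 1 "x ^ T"] assms(1) by (simp add: norm_power)
  then have "norm (\<Sum>t<T. x ^ t) \<le> 2 / norm (1 - x)"
    using assms(2) by (simp add: sum_gp_strict norm_divide divide_right_mono)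
  then have "norm (\<Sum>t<T. x ^ t) / real T \<le> 2 / norm (1 - x) / real T"
    by (rule divide_right_mono) simp
  then show ?thesis
    by (simp add: geom_avg_def norm_divide mult.commute)
qed

lemma sum_mult_cnj_sum:
  "(\<Sum>k\<in>A. f k) * cnj (\<Sum>k\<in>A. g k) = (\<Sum>k\<in>A. \<Sum>k'\<in>A. f k * cnj (g k'))"
  by (simp add: cnj_sum sum_product)

definition coin :: "bool \<Rightarrow> bool \<Rightarrow> complex" where
  "coin a b = (if b = a then 1 else 0)"

(* The Hadamard coin followed by the phases A on R and B on L, with the factor
   1 / sqrt 2 of the Hadamard matrix absorbed into A and B. *)
definition coin_step :: "'a::field \<Rightarrow> 'a \<Rightarrow> (bool \<Rightarrow> 'a) \<Rightarrow> bool \<Rightarrow> 'a" where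
  "coin_step A B v b = (if b then A * (v True + v False) else B * (v True - v False))"

lemma coin_step_linear:
  "coin_step A B (\<lambda>b. c * f b + c' * g b) b = c * coin_step A B f b + c' * coin_step A B g b"
  by (simp add: coin_step_def algebra_simps)

lemma coin_step_spectral_component:
  fixes A B l m :: "'a::field"
  assumes trace: "l + m = A - B" and det: "l * m = - 2 * A * B" and "l \<noteq> m"
  shows "coin_step A B (\<lambda>b. (coin_step A B e b - m * e b) / (l - m)) b
    = l * ((coin_step A B e b - m * e b) / (l - m))"
proof -
  (* l and m are the roots of x^2 - (A - B) x - 2 A B, the characteristic polynomial
     of M = coin_step A B, so (M - l) (M - m) = 0 by Cayley-Hamilton. *)
  have m: "m = A - B - l" using trace by (simp add: algebra_simps)
  have char: "l * (A - B - l) = - 2 * A * B" using det m by simp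
  have "coin_step A B (\<lambda>b. coin_step A B e b - m * e b) b = l * (coin_step A B e b - m * e b)"
    unfolding m coin_step_def using char by (cases b; simp; algebra)
  moreover have "coin_step A B (\<lambda>b. v b / c) b = coin_step A B v b / c" for v c
    by (simp add: coin_step_def flip: add_divide_distrib diff_divide_distrib)
  ultimately show ?thesis by simp
qed

lemma spectral_components_sum:
  fixes l m x e :: "'a::field"
  assumes "l \<noteq> m"
  shows "(x - m * e) / (l - m) + (x - l * e) / (m - l) = e"
proof -
  have "(x - l * e) / (m - l) = - ((x - l * e) / (l - m))"
    by (metis minus_diff_eq divide_minus_right)
  then have "(x - m * e) / (l - m) + (x - l * e) / (m - l) = ((x - m * e) - (x - l * e)) / (l - m)"
    by (simp add: diff_divide_distrib)
  also have "\<dots> = e" using assms by (simp add: field_simps)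
  finally show ?thesis .
qed

locale hadamard_cycle =
  fixes n :: nat
  assumes odd_n: "odd n" and n_ge_3: "3 \<le> n"
begin

lemma n_pos: "0 < n"
  using n_ge_3 by simp

lemma one_le_log_factor: "1 \<le> 1 + ln (real n)"
  using n_pos by simp

definition omega :: "int \<Rightarrow> complex" where
  "omega x = cis (2 * pi * of_int x / real n)"

lemma omega_add: "omega (x + y) = omega x * omega y"
  by (simp add: omega_def cis_mult add_divide_distrib distrib_left)

lemma omega_0 [simp]: "omega 0 = 1"
  by (simp add: omega_def)

lemma norm_omega [simp]: "norm (omega x) = 1"
  by (simp add: omega_def)

lemma cnj_omega: "cnj (omega x) = omega (- x)"
  by (simp add: omega_def cis_cnj)

lemma omega_n_mult: "omega (int n * m) = 1"
proof -
  have "2 * pi * of_int (int n * m) / real n = 2 * pi * of_int m"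
    using n_pos by (simp add: field_simps)
  then show ?thesis by (simp add: omega_def)
qed

lemma omega_mod: "omega (x mod int n) = omega x"
proof -
  have "omega x = omega (x mod int n) * omega (int n * (x div int n))"
    by (metis omega_add mod_mult_div_eq add.commute)
  then show ?thesis by (simp add: omega_n_mult)
qed

lemma omega_cong: "x mod int n = y mod int n \<Longrightarrow> omega x = omega y"
  by (metis omega_mod)

lemma omega_eq_1_iff: "omega m = 1 \<longleftrightarrow> int n dvd m"
proof
  assume "omega m = 1"
  then have "cos (2 * pi * of_int m / real n) = 1"
    unfolding omega_def by (metis Re_complex_of_real cis.sel(1) of_real_1)
  then obtain l :: int where "2 * pi * of_int m / real n = of_int l * 2 * pi"
    by (auto simp: cos_one_2pi_int)
  then have "of_int m = of_int l * real n" using n_pos by (simp add: field_simps)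
  then have "m = l * int n" by (metis of_int_eq_iff of_int_mult of_int_of_nat_eq)
  then show "int n dvd m" by simp
next
  assume "int n dvd m"
  then obtain l where "m = int n * l" by (auto simp: dvd_def)
  then show "omega m = 1" by (simp add: omega_n_mult)
qed

lemma omega_power: "omega (m * int k) = omega m ^ k"
  by (induction k) (simp_all add: distrib_left omega_add)

lemma omega_diff_mult: "omega (c * int k) * cnj (omega (c * int k')) = omega (c * (int k - int k'))"
  by (simp add: cnj_omega omega_add[symmetric] algebra_simps)

lemma sum_omega: "(\<Sum>k<n. omega (m * int k)) = (if int n dvd m then of_nat n else 0)"
proof (cases "int n dvd m")
  case True
  then have "omega (m * int k) = 1" for k
    by (simp add: omega_eq_1_iff)
  then show ?thesis using True by simp
next
  case False
  have "omega m ^ n = 1" by (metis omega_power omega_n_mult mult.commute)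
  moreover have "omega m \<noteq> 1" using False by (simp add: omega_eq_1_iff)
  ultimately show ?thesis using False by (simp add: omega_power sum_gp_strict)
qed

lemma int_dvd_diff_iff_eq:
  assumes "i < n" "j < n"
  shows "int n dvd (int j - int i) \<longleftrightarrow> i = j"
proof
  assume dvd: "int n dvd (int j - int i)"
  show "i = j"
  proof (rule ccontr)
    assume "i \<noteq> j"
    then have "int j - int i \<noteq> 0" by simp
    then have "\<bar>int n\<bar> \<le> \<bar>int j - int i\<bar>" using dvd dvd_imp_le_int by blast
    then show False using assms by linarith
  qed
qed simp

section \<open>The Fourier modes of the walk\<close>

definition sin_freq :: "nat \<Rightarrow> real" where
  "sin_freq k = sin (2 * pi * real k / real n)"

definition rho :: "nat \<Rightarrow> real" where
  "rho k = sqrt (1 - (sin_freq k)\<^sup>2 / 2)"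

(* Moving R to the right and L to the left multiplies the k-th Fourier mode by
   omega (- k) and by omega k respectively. *)
definition mode_step :: "nat \<Rightarrow> (bool \<Rightarrow> complex) \<Rightarrow> bool \<Rightarrow> complex" where
  "mode_step k = coin_step (omega (- int k) / of_real (sqrt 2)) (omega (int k) / of_real (sqrt 2))"

(* The eigenvalues of mode_step k, whose trace is - i sqrt 2 sin_freq k and whose
   determinant is -1. *)
definition eigval :: "nat \<Rightarrow> bool \<Rightarrow> complex" where
  "eigval k s = Complex (if s then rho k else - rho k) (- sin_freq k / sqrt 2)"

definition eigcomp :: "bool \<Rightarrow> nat \<Rightarrow> bool \<Rightarrow> bool \<Rightarrow> complex" where
  "eigcomp a k s b =
     (mode_step k (coin a) b - eigval k (\<not> s) * coin a b) / (eigval k s - eigval k (\<not> s))"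

definition mode_state :: "bool \<Rightarrow> nat \<Rightarrow> nat \<Rightarrow> bool \<Rightarrow> complex" where
  "mode_state a k t b = eigval k True ^ t * eigcomp a k True b + eigval k False ^ t * eigcomp a k False b"

lemma sin_freq_sq_le_1: "(sin_freq k)\<^sup>2 \<le> 1"
  unfolding sin_freq_def by (metis sin_cos_squared_add le_add_same_cancel1 zero_le_power2)

lemma rho_sq: "(rho k)\<^sup>2 = 1 - (sin_freq k)\<^sup>2 / 2"
  using sin_freq_sq_le_1[of k] by (simp add: rho_def)

lemma rho_ge_half: "1 / 2 \<le> rho k"
  unfolding rho_def using sin_freq_sq_le_1[of k] by (intro real_le_rsqrt) (simp add: power2_eq_square)

lemma eigval_mult_cnj: "eigval k s * cnj (eigval k s) = 1"
  using rho_sq[of k] by (simp add: complex_eq_iff eigval_def power2_eq_square power_divide)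

lemma norm_eigval [simp]: "norm (eigval k s) = 1"
  unfolding cmod_def using rho_sq[of k] by (cases s) (simp_all add: eigval_def power_divide)

lemma eigval_sum:
  "eigval k s + eigval k (\<not> s) = omega (- int k) / of_real (sqrt 2) - omega (int k) / of_real (sqrt 2)"
  by (cases s) (simp_all add: complex_eq_iff eigval_def omega_def sin_freq_def Re_divide_of_real Im_divide_of_real)

lemma eigval_prod:
  "eigval k s * eigval k (\<not> s) = - 2 * (omega (- int k) / of_real (sqrt 2)) * (omega (int k) / of_real (sqrt 2))"
proof -
  have "omega (- int k) * omega (int k) = 1"
    by (simp flip: omega_add)
  moreover have "complex_of_real (sqrt 2) * complex_of_real (sqrt 2) = 2"
    by (simp flip: of_real_mult)
  moreover have "eigval k s * eigval k (\<not> s) = -1"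
    using rho_sq[of k] by (cases s) (simp_all add: complex_eq_iff eigval_def power2_eq_square power_divide algebra_simps)
  ultimately show ?thesis by (simp add: field_simps)
qed

lemma eigval_neq: "eigval k s \<noteq> eigval k (\<not> s)"
  using rho_ge_half[of k] by (cases s) (simp_all add: eigval_def)

lemma mode_step_eigcomp: "mode_step k (eigcomp a k s) b = eigval k s * eigcomp a k s b"
  unfolding mode_step_def eigcomp_def
  by (rule coin_step_spectral_component[OF eigval_sum eigval_prod eigval_neq])

lemma mode_state_0: "mode_state a k 0 b = coin a b"
  using spectral_components_sum[OF eigval_neq[of k True], of "mode_step k (coin a) b" "coin a b"]
  by (simp add: mode_state_def eigcomp_def)

lemma mode_state_Suc: "mode_state a k (Suc t) b = mode_step k (mode_state a k t) b"
proof -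
  have "mode_state a k t = (\<lambda>b. eigval k True ^ t * eigcomp a k True b + eigval k False ^ t * eigcomp a k False b)"
    by (simp add: mode_state_def fun_eq_iff)
  then show ?thesis
    by (simp add: mode_step_def coin_step_linear mode_step_eigcomp[unfolded mode_step_def] mode_state_def)
qed

section \<open>Fourier expansion of the distributions\<close>

lemma omega_pred_shift:
  assumes "j < n"
  shows "omega ((int ((j + n - 1) mod n) - int i) * int k) = omega ((int j - int i) * int k) * omega (- int k)"
proof -
  have "int ((j + n - 1) mod n) = ((int j - 1) + int n) mod int n"
    using n_pos by (simp add: zmod_int of_nat_diff algebra_simps)
  then have "int ((j + n - 1) mod n) mod int n = (int j - 1) mod int n"
    by simp
  then have "omega ((int ((j + n - 1) mod n) - int i) * int k) = omega ((int j - 1 - int i) * int k)"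
    by (intro omega_cong) (metis mod_mult_left_eq mod_diff_left_eq)
  then show ?thesis by (simp add: algebra_simps flip: omega_add)
qed

lemma omega_succ_shift:
  "omega ((int ((j + 1) mod n) - int i) * int k) = omega ((int j - int i) * int k) * omega (int k)"
proof -
  have "int ((j + 1) mod n) mod int n = (int j + 1) mod int n"
    by (simp add: zmod_int add.commute)
  then have "omega ((int ((j + 1) mod n) - int i) * int k) = omega ((int j + 1 - int i) * int k)"
    by (intro omega_cong) (metis mod_mult_left_eq mod_diff_left_eq)
  then show ?thesis by (simp add: algebra_simps flip: omega_add)
qed

lemma walk_state_fourier:
  assumes "i < n" "j < n"
  shows "walk_state n a i t b j = (\<Sum>k<n. omega ((int j - int i) * int k) * mode_state a k t b) / of_nat n"
  using assms(2)
proof (induction t arbitrary: j b)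
  case 0
  have "(\<Sum>k<n. omega ((int j - int i) * int k) * mode_state a k 0 b)
      = coin a b * (\<Sum>k<n. omega ((int j - int i) * int k))"
    by (simp add: mode_state_0 sum_distrib_left mult.commute)
  also have "\<dots> = coin a b * (if i = j then of_nat n else 0)"
    using sum_omega[of "int j - int i"] int_dvd_diff_iff_eq[OF assms(1) 0] by simp
  finally show ?case
    using n_pos by (simp add: walk_state_def basis_state_def coin_def)
next
  case (Suc t)
  define F where "F b j = (\<Sum>k<n. omega ((int j - int i) * int k) * mode_state a k t b)" for b j
  have IH: "walk_state n a i t b j' = F b j' / of_nat n" if "j' < n" for b j'
    using Suc.IH[OF that] by (simp add: F_def)
  have pred: "F b ((j + n - 1) mod n) = (\<Sum>k<n. omega ((int j - int i) * int k) * (omega (- int k) * mode_state a k t b))" for b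
    by (simp only: F_def omega_pred_shift[OF Suc.prems] mult.assoc)
  have succ: "F b ((j + 1) mod n) = (\<Sum>k<n. omega ((int j - int i) * int k) * (omega (int k) * mode_state a k t b))" for b
    by (simp only: F_def omega_succ_shift mult.assoc)
  define j1 j2 where "j1 = (j + n - 1) mod n" and "j2 = (j + 1) mod n"
  have j12: "j1 < n" "j2 < n"
    using n_pos by (simp_all add: j1_def j2_def)
  have "walk_state n a i (Suc t) b j
      = (if b then walk_state n a i t True j1 + walk_state n a i t False j1
         else walk_state n a i t True j2 - walk_state n a i t False j2) / of_real (sqrt 2)"
    by (simp add: walk_state_def walk_step_def j1_def j2_def)
  also have "\<dots> = (if b then F True j1 + F False j1 else F True j2 - F False j2) / of_real (sqrt 2) / of_nat n"
    by (simp add: IH[OF j12(1)] IH[OF j12(2)] add_divide_distrib diff_divide_distrib mult.commute)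
  also have "\<dots> = (\<Sum>k<n. omega ((int j - int i) * int k) * mode_state a k (Suc t) b) / of_nat n"
    unfolding j1_def j2_def pred succ mode_state_Suc mode_step_def coin_step_def
    by (cases b; simp add: sum_divide_distrib algebra_simps flip: sum.distrib sum_subtractf;
        intro sum.cong refl; simp add: field_simps)
  finally show ?case .
qed

lemma fourier_mult_cnj:
  "(\<Sum>k<n. omega (c * int k) * X k) * cnj (\<Sum>k<n. omega (c * int k) * Y k)
    = (\<Sum>k<n. \<Sum>k'<n. omega (c * (int k - int k')) * (X k * cnj (Y k')))"
proof -
  have "omega (c * int k) * X k * cnj (omega (c * int k') * Y k')
      = omega (c * (int k - int k')) * (X k * cnj (Y k'))" for k k'
    using omega_diff_mult[of c k k'] by (simp add: algebra_simps)
  then show ?thesis by (simp only: sum_mult_cnj_sum)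
qed

definition phase :: "nat \<Rightarrow> bool \<Rightarrow> nat \<Rightarrow> bool \<Rightarrow> complex" where
  "phase k s k' s' = eigval k s * cnj (eigval k' s')"

definition overlap :: "bool \<Rightarrow> nat \<Rightarrow> bool \<Rightarrow> nat \<Rightarrow> bool \<Rightarrow> complex" where
  "overlap a k s k' s' = (\<Sum>b\<in>UNIV. eigcomp a k s b * cnj (eigcomp a k' s' b))"

lemma mode_state_inner:
  "(\<Sum>b\<in>UNIV. mode_state a k t b * cnj (mode_state a k' t b))
    = (\<Sum>s\<in>UNIV. \<Sum>s'\<in>UNIV. phase k s k' s' ^ t * overlap a k s k' s')"
  by (simp add: mode_state_def overlap_def phase_def UNIV_bool power_mult_distrib algebra_simps)

lemma walk_prob_fourier:
  assumes "i < n" "j < n"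
  shows "complex_of_real (walk_prob n a i t j) =
    (\<Sum>k<n. \<Sum>k'<n. omega ((int j - int i) * (int k - int k')) *
        (\<Sum>s\<in>UNIV. \<Sum>s'\<in>UNIV. phase k s k' s' ^ t * overlap a k s k' s')) / (of_nat n)\<^sup>2"
proof -
  define S where "S b = (\<Sum>k<n. omega ((int j - int i) * int k) * mode_state a k t b)" for b
  have state: "walk_state n a i t b j = S b / of_nat n" for b
    by (simp add: walk_state_fourier[OF assms] S_def)
  have "complex_of_real (walk_prob n a i t j) = (\<Sum>b\<in>UNIV. walk_state n a i t b j * cnj (walk_state n a i t b j))"
    by (simp add: walk_prob_def UNIV_bool add.commute flip: complex_norm_square)
  also have "\<dots> = (\<Sum>b\<in>UNIV. S b * cnj (S b)) / (of_nat n)\<^sup>2"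
    by (simp add: state sum_divide_distrib power2_eq_square)
  also have "(\<Sum>b\<in>UNIV. S b * cnj (S b)) = (\<Sum>b\<in>UNIV. \<Sum>k<n. \<Sum>k'<n.
      omega ((int j - int i) * (int k - int k')) * (mode_state a k t b * cnj (mode_state a k' t b)))"
    by (simp only: S_def fourier_mult_cnj)
  also have "\<dots> = (\<Sum>k<n. \<Sum>k'<n. omega ((int j - int i) * (int k - int k')) *
      (\<Sum>b\<in>UNIV. mode_state a k t b * cnj (mode_state a k' t b)))"
    by (simp add: sum_distrib_left sum.swap[of _ UNIV])
  finally show ?thesis by (simp add: mode_state_inner)
qed

(* The diagonal terms (k, s) = (k', s') have phase 1 and survive the averaging:
   they make up limit_value, everything else goes into error_term. *)
definition offdiag_avg :: "nat \<Rightarrow> nat \<Rightarrow> bool \<Rightarrow> nat \<Rightarrow> bool \<Rightarrow> complex" where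
  "offdiag_avg T k s k' s' = (if k = k' \<and> s = s' then 0 else geom_avg T (phase k s k' s'))"

definition limit_value :: "bool \<Rightarrow> complex" where
  "limit_value a = (\<Sum>k<n. \<Sum>s\<in>UNIV. overlap a k s k s) / (of_nat n)\<^sup>2"

definition error_coeff :: "bool \<Rightarrow> nat \<Rightarrow> nat \<Rightarrow> nat \<Rightarrow> complex" where
  "error_coeff a T k k' = (\<Sum>s\<in>UNIV. \<Sum>s'\<in>UNIV. offdiag_avg T k s k' s' * overlap a k s k' s')"

definition error_term :: "bool \<Rightarrow> nat \<Rightarrow> nat \<Rightarrow> nat \<Rightarrow> complex" where
  "error_term a i T j =
     (\<Sum>k<n. \<Sum>k'<n. omega ((int j - int i) * (int k - int k')) * error_coeff a T k k') / (of_nat n)\<^sup>2"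

lemma avg_prob_fourier:
  assumes "i < n" "j < n"
  shows "complex_of_real (avg_prob n a i T j) =
    (\<Sum>k<n. \<Sum>k'<n. omega ((int j - int i) * (int k - int k')) *
        (\<Sum>s\<in>UNIV. \<Sum>s'\<in>UNIV. geom_avg T (phase k s k' s') * overlap a k s k' s')) / (of_nat n)\<^sup>2"
proof -
  have "complex_of_real (avg_prob n a i T j) = (\<Sum>t<T. complex_of_real (walk_prob n a i t j)) / of_nat T"
    by (simp add: avg_prob_def)
  also have "\<dots> = (\<Sum>k<n. \<Sum>k'<n. \<Sum>t<T. omega ((int j - int i) * (int k - int k')) *
        (\<Sum>s\<in>UNIV. \<Sum>s'\<in>UNIV. phase k s k' s' ^ t * overlap a k s k' s')) / (of_nat n)\<^sup>2 / of_nat T"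
    by (simp add: walk_prob_fourier[OF assms] flip: sum_divide_distrib)
       (simp add: sum.swap[of _ "{..<T}"])
  finally show ?thesis
    by (simp add: geom_avg_def sum_divide_distrib sum_distrib_left sum_distrib_right
        sum.swap[of _ "{..<T}"] mult.commute mult.left_commute)
qed

lemma of_real_avg_prob_split:
  assumes "i < n" "j < n" "1 \<le> T"
  shows "complex_of_real (avg_prob n a i T j) = limit_value a + error_term a i T j"
proof -
  have split: "geom_avg T (phase k s k' s') = offdiag_avg T k s k' s' + (if k = k' \<and> s = s' then 1 else 0)"
    for k s k' s'
    using assms(3) by (simp add: offdiag_avg_def phase_def eigval_mult_cnj geom_avg_1)
  have diag: "(\<Sum>k'<n. omega (c * (int k - int k')) *
        (\<Sum>s\<in>UNIV. \<Sum>s'\<in>UNIV. (if k = k' \<and> s = s' then 1 else 0) * overlap a k s k' s'))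
      = (\<Sum>s\<in>UNIV. overlap a k s k s)" if "k < n" for k c
  proof -
    have "(\<Sum>k'<n. omega (c * (int k - int k')) *
        (\<Sum>s\<in>UNIV. \<Sum>s'\<in>UNIV. (if k = k' \<and> s = s' then 1 else 0) * overlap a k s k' s'))
      = (\<Sum>k'<n. if k' = k then (\<Sum>s\<in>UNIV. overlap a k s k s) else 0)"
      by (rule sum.cong) (auto simp: UNIV_bool)
    then show ?thesis using that by simp
  qed
  show ?thesis
    unfolding avg_prob_fourier[OF assms(1,2)] limit_value_def error_term_def error_coeff_def
    by (simp add: split distrib_right sum.distrib distrib_left diag add_divide_distrib add.commute)
qed

section \<open>Parseval's identity on the cycle\<close>

lemma sum_circ_reindex:
  assumes "k < n"
  shows "(\<Sum>k'<n. f k') = (\<Sum>d<n. f ((k + n - d) mod n))"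
proof -
  have involution: "(k + n - (k + n - x) mod n) mod n = x" if "x < n" for x
  proof (cases "x \<le> k")
    case True
    then have "(k + n - x) mod n = k - x"
      using assms that by (metis add.commute add_diff_assoc2 diff_le_self mod_add_self1 mod_less order_le_less_trans)
    then show ?thesis using True that by simp
  next
    case False
    then show ?thesis using assms that by simp
  qed
  show ?thesis
    by (rule sum.reindex_bij_witness[where i="\<lambda>x. (k + n - x) mod n" and j="\<lambda>x. (k + n - x) mod n"])
       (use involution n_pos in auto)
qed

lemma omega_circ_diff:
  assumes "k < n" "d < n"
  shows "omega (c * (int k - int ((k + n - d) mod n))) = omega (c * int d)"
proof -
  have "int ((k + n - d) mod n) = (int k - int d + int n) mod int n"
    using assms by (simp add: zmod_int of_nat_diff algebra_simps)
  then have "(int k - int ((k + n - d) mod n)) mod int n = int d mod int n"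
    by (simp add: mod_diff_right_eq)
  then show ?thesis
    by (intro omega_cong) (metis mod_mult_right_eq)
qed

lemma fourier_circ_convolution:
  "(\<Sum>k<n. \<Sum>k'<n. omega (c * (int k - int k')) * A k k')
    = (\<Sum>d<n. omega (c * int d) * (\<Sum>k<n. A k ((k + n - d) mod n)))"
proof -
  have "(\<Sum>k'<n. omega (c * (int k - int k')) * A k k') = (\<Sum>d<n. omega (c * int d) * A k ((k + n - d) mod n))"
    if "k < n" for k
  proof -
    have "(\<Sum>k'<n. omega (c * (int k - int k')) * A k k')
        = (\<Sum>d<n. omega (c * (int k - int ((k + n - d) mod n))) * A k ((k + n - d) mod n))"
      by (rule sum_circ_reindex[OF that])
    also have "\<dots> = (\<Sum>d<n. omega (c * int d) * A k ((k + n - d) mod n))"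
      by (intro sum.cong refl) (simp add: omega_circ_diff[OF that])
    finally show ?thesis .
  qed
  then have "(\<Sum>k<n. \<Sum>k'<n. omega (c * (int k - int k')) * A k k')
      = (\<Sum>k<n. \<Sum>d<n. omega (c * int d) * A k ((k + n - d) mod n))"
    by (rule sum.cong[OF refl]) simp
  then show ?thesis
    by (simp add: sum_distrib_left) (rule sum.swap)
qed

lemma parseval:
  "(\<Sum>j<n. (norm (\<Sum>d<n. omega ((int j - int i) * int d) * B d))\<^sup>2) = real n * (\<Sum>d<n. (norm (B d))\<^sup>2)"
proof -
  have orth: "(\<Sum>j<n. omega ((int j - int i) * (int d - int d'))) = (if d' = d then of_nat n else 0)"
    if "d < n" "d' < n" for d d'
  proof -
    have "omega ((int j - int i) * m) = omega (- int i * m) * omega (m * int j)" for j m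
      by (simp add: algebra_simps flip: omega_add)
    then have "(\<Sum>j<n. omega ((int j - int i) * (int d - int d')))
        = omega (- int i * (int d - int d')) * (\<Sum>j<n. omega ((int d - int d') * int j))"
      by (simp only: sum_distrib_left)
    then show ?thesis
      using that by (simp add: sum_omega int_dvd_diff_iff_eq)
  qed
  have "complex_of_real (\<Sum>j<n. (norm (\<Sum>d<n. omega ((int j - int i) * int d) * B d))\<^sup>2)
      = (\<Sum>j<n. \<Sum>d<n. \<Sum>d'<n. omega ((int j - int i) * (int d - int d')) * (B d * cnj (B d')))"
    by (simp only: of_real_sum complex_norm_square fourier_mult_cnj)
  also have "\<dots> = (\<Sum>d<n. \<Sum>d'<n. (\<Sum>j<n. omega ((int j - int i) * (int d - int d'))) * (B d * cnj (B d')))"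
    by (subst sum.swap, rule sum.cong[OF refl], subst sum.swap, simp add: sum_distrib_right)
  also have "\<dots> = (\<Sum>d<n. \<Sum>d'<n. if d' = d then of_nat n * (B d * cnj (B d')) else 0)"
    by (intro sum.cong refl) (simp add: orth)
  also have "\<dots> = of_nat n * (\<Sum>d<n. B d * cnj (B d))"
    by (simp add: sum_distrib_left)
  also have "\<dots> = complex_of_real (real n * (\<Sum>d<n. (norm (B d))\<^sup>2))"
    by (simp only: of_real_mult of_real_sum complex_norm_square of_real_of_nat_eq)
  finally show ?thesis
    by (simp only: of_real_eq_iff)
qed

lemma sum_norm_fourier_le:
  assumes bound: "\<And>d. d < n \<Longrightarrow> (\<Sum>k<n. norm (A k ((k + n - d) mod n))) \<le> \<beta> d"
  shows "(\<Sum>j<n. norm (\<Sum>k<n. \<Sum>k'<n. omega ((int j - int i) * (int k - int k')) * A k k'))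
          \<le> real n * sqrt (\<Sum>d<n. (\<beta> d)\<^sup>2)"
proof -
  define B where "B d = (\<Sum>k<n. A k ((k + n - d) mod n))" for d
  define S where "S j = norm (\<Sum>d<n. omega ((int j - int i) * int d) * B d)" for j
  have "(\<Sum>d<n. (norm (B d))\<^sup>2) \<le> (\<Sum>d<n. (\<beta> d)\<^sup>2)"
    unfolding B_def by (intro sum_mono power_mono order_trans[OF norm_sum bound]) auto
  then have "(\<Sum>j<n. (S j)\<^sup>2) \<le> real n * (\<Sum>d<n. (\<beta> d)\<^sup>2)"
    unfolding S_def parseval by (simp add: mult_left_mono)
  moreover have "(\<Sum>j<n. 1 * S j)\<^sup>2 \<le> (\<Sum>j<n. 1\<^sup>2) * (\<Sum>j<n. (S j)\<^sup>2)"
    by (rule Cauchy_Schwarz_ineq_sum)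
  ultimately have "(\<Sum>j<n. S j)\<^sup>2 \<le> real n * (real n * (\<Sum>d<n. (\<beta> d)\<^sup>2))"
    by (simp add: order_trans[OF _ mult_left_mono])
  also have "\<dots> = (real n * sqrt (\<Sum>d<n. (\<beta> d)\<^sup>2))\<^sup>2"
    by (simp add: power_mult_distrib sum_nonneg power2_eq_square)
  finally have "(\<Sum>j<n. S j) \<le> real n * sqrt (\<Sum>d<n. (\<beta> d)\<^sup>2)"
    by (rule power2_le_imp_le) (simp add: sum_nonneg)
  then show ?thesis
    by (simp add: S_def B_def fourier_circ_convolution)
qed

section \<open>Gaps between eigenvalues\<close>

definition sym_res :: "int \<Rightarrow> int" where
  "sym_res N = (if N mod (2 * int n) \<le> int n then N mod (2 * int n) else N mod (2 * int n) - 2 * int n)"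

lemma abs_sym_res_le: "\<bar>sym_res N\<bar> \<le> int n"
proof -
  have "N mod (2 * int n) < 2 * int n" "0 \<le> N mod (2 * int n)"
    using n_pos by simp_all
  then show ?thesis by (auto simp: sym_res_def)
qed

lemma sym_res_mod: "sym_res N mod (2 * int n) = N mod (2 * int n)"
  by (auto simp: sym_res_def)

lemma sym_res_decomp: "\<exists>l. N = 2 * int n * l + sym_res N"
proof -
  have N: "N = 2 * int n * (N div (2 * int n)) + N mod (2 * int n)"
    by simp
  show ?thesis
  proof (cases "N mod (2 * int n) \<le> int n")
    case True
    then have "N = 2 * int n * (N div (2 * int n)) + sym_res N"
      using N by (simp add: sym_res_def)
    then show ?thesis ..
  next
    case False
    then have "N = 2 * int n * (N div (2 * int n) + 1) + sym_res N"
      by (subst N) (simp add: sym_res_def algebra_simps)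
    then show ?thesis ..
  qed
qed

lemma abs_sin_ge_sym_res: "\<bar>real_of_int (sym_res N)\<bar> / (2 * real n) \<le> \<bar>sin (pi * real_of_int N / (2 * real n))\<bar>"
proof -
  obtain l where l: "N = 2 * int n * l + sym_res N"
    using sym_res_decomp by blast
  have N: "real_of_int N = 2 * real n * real_of_int l + real_of_int (sym_res N)"
    by (subst l) simp
  define x where "x = pi * real_of_int N / (2 * real n) - real_of_int l * pi"
  have x: "x = pi * real_of_int (sym_res N) / (2 * real n)"
    using n_pos N by (simp add: x_def field_simps)
  have "\<bar>real_of_int (sym_res N)\<bar> \<le> real n"
    using abs_sym_res_le[of N] by linarith
  then have "\<bar>x\<bar> \<le> pi / 2"
    unfolding x using n_pos by (simp add: abs_mult field_simps mult_left_mono)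
  then have "\<bar>x\<bar> / 3 \<le> \<bar>sin (pi * real_of_int N / (2 * real n))\<bar>"
    using abs_sin_ge_dist_div_3[of _ l] pi_less_4 by (simp add: x_def)
  moreover have "\<bar>real_of_int (sym_res N)\<bar> / (2 * real n) \<le> \<bar>x\<bar> / 3"
    unfolding x using pi_gt3 n_pos by (simp add: abs_mult field_simps mult_right_mono)
  ultimately show ?thesis by linarith
qed

(* The value at d = 0 only avoids a division by zero. *)
definition circ_dist :: "nat \<Rightarrow> nat" where
  "circ_dist d = (if d = 0 then 1 else min d (n - d))"

lemma circ_dist_pos: "0 < circ_dist d" if "d < n"
  using that by (simp add: circ_dist_def)

(* By sin a - sin b = 2 sin ((a - b) / 2) cos ((a + b) / 2) the gap between
   sin_freq k and sin_freq (k - d) is 2 sin (pi d / n) sin (pi mid_freq d k / (2 n)).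
   As n is odd, so is mid_freq d k, which keeps the second factor away from 0. *)
definition mid_freq :: "nat \<Rightarrow> nat \<Rightarrow> int" where
  "mid_freq d k = 2 * (2 * int k - int d) + int n"

lemma abs_sym_res_double:
  assumes "0 < d" "d < n"
  shows "\<bar>sym_res (2 * int d)\<bar> = 2 * int (circ_dist d)"
proof -
  have "2 * int d \<noteq> int n"
    using odd_n by (metis even_of_nat_iff dvd_triv_left of_nat_mult of_nat_numeral)
  then show ?thesis
    using assms by (auto simp: sym_res_def circ_dist_def)
qed

lemma sym_res_mid_freq_neq_0: "sym_res (mid_freq d k) \<noteq> 0"
proof -
  have "sym_res (mid_freq d k) mod 2 = mid_freq d k mod 2"
    by (metis sym_res_mod mod_mod_cancel dvd_triv_left)
  then show ?thesis
    using odd_n by (auto simp: mid_freq_def)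
qed

lemma inj_on_sym_res_mid_freq: "inj_on (\<lambda>k. sym_res (mid_freq d k)) {..<n}"
proof (rule inj_onI)
  fix k1 k2 assume k: "k1 \<in> {..<n}" "k2 \<in> {..<n}" and eq: "sym_res (mid_freq d k1) = sym_res (mid_freq d k2)"
  have "2 * int n dvd mid_freq d k1 - mid_freq d k2"
    using arg_cong[OF eq, of "\<lambda>x. x mod (2 * int n)"] by (simp add: sym_res_mod mod_eq_dvd_iff)
  moreover have "mid_freq d k1 - mid_freq d k2 = 2 * (2 * (int k1 - int k2))"
    by (simp add: mid_freq_def algebra_simps)
  ultimately have "int n dvd 2 * (int k1 - int k2)"
    by (metis dvd_mult_cancel_left mult.assoc zero_neq_numeral)
  moreover have "coprime (int n) 2"
    using odd_n by (simp add: coprime_commute)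
  ultimately have "int n dvd int k1 - int k2"
    using coprime_dvd_mult_right_iff by blast
  then show "k1 = k2"
    using int_dvd_diff_iff_eq[of k2 k1] k by simp
qed

lemma sin_freq_circ_shift:
  assumes "k < n" "d < n"
  shows "sin_freq ((k + n - d) mod n) = sin (2 * pi * (real k - real d) / real n)"
proof -
  define q where "q = (k + n - d) div n"
  have "real ((k + n - d) mod n) + real n * real q = real (k + n - d)"
    unfolding q_def by (metis of_nat_add of_nat_mult mod_mult_div_eq)
  then have shift: "real ((k + n - d) mod n) = real k - real d + real n * real_of_int (1 - int q)"
    using assms by (simp add: of_nat_diff algebra_simps)
  have "2 * pi * real ((k + n - d) mod n) / real n
      = 2 * pi * (real k - real d) / real n + 2 * pi * real_of_int (1 - int q)"
    unfolding shift using n_pos by (simp add: field_simps)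
  then show ?thesis
    by (simp only: sin_freq_def sin_add sin_int_2pin cos_int_2pin)
qed

lemma sin_freq_diff:
  assumes "k < n" "d < n"
  shows "sin_freq k - sin_freq ((k + n - d) mod n)
    = 2 * sin (pi * real_of_int (2 * int d) / (2 * real n)) * sin (pi * real_of_int (mid_freq d k) / (2 * real n))"
proof -
  define w z where "w = 2 * pi * real k / real n" and "z = 2 * pi * (real k - real d) / real n"
  have diff: "(w - z) / 2 = pi * real_of_int (2 * int d) / (2 * real n)"
    using n_pos by (simp add: w_def z_def field_simps)
  have sum: "(w + z) / 2 + pi / 2 = pi * real_of_int (mid_freq d k) / (2 * real n)"
    using n_pos by (simp add: w_def z_def mid_freq_def field_simps)
  have cos_sin: "cos x = sin (x + pi / 2)" for x :: real
    by (simp add: sin_add)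
  have "sin_freq k - sin_freq ((k + n - d) mod n) = 2 * sin ((w - z) / 2) * cos ((w + z) / 2)"
    unfolding sin_freq_circ_shift[OF assms] by (simp add: sin_freq_def w_def z_def sin_diff_sin)
  also have "\<dots> = 2 * sin ((w - z) / 2) * sin ((w + z) / 2 + pi / 2)"
    by (simp only: cos_sin)
  finally show ?thesis
    by (simp only: diff sum)
qed

lemma sin_freq_diff_ge:
  assumes "k < n" "0 < d" "d < n"
  shows "real (circ_dist d) * \<bar>real_of_int (sym_res (mid_freq d k))\<bar> / (real n)\<^sup>2
    \<le> \<bar>sin_freq k - sin_freq ((k + n - d) mod n)\<bar>"
proof -
  have "\<bar>real_of_int (sym_res (2 * int d))\<bar> = 2 * real (circ_dist d)"
    using abs_sym_res_double[OF assms(2,3)] by (metis of_int_abs of_int_mult of_int_numeral of_int_of_nat_eq)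
  then have double: "real (circ_dist d) / real n \<le> \<bar>sin (pi * real_of_int (2 * int d) / (2 * real n))\<bar>"
    using abs_sin_ge_sym_res[of "2 * int d"] n_pos by simp
  have "real (circ_dist d) * \<bar>real_of_int (sym_res (mid_freq d k))\<bar> / (real n)\<^sup>2
      = 2 * (real (circ_dist d) / real n) * (\<bar>real_of_int (sym_res (mid_freq d k))\<bar> / (2 * real n))"
    using n_pos by (simp add: field_simps power2_eq_square)
  also have "\<dots> \<le> 2 * \<bar>sin (pi * real_of_int (2 * int d) / (2 * real n))\<bar>
      * \<bar>sin (pi * real_of_int (mid_freq d k) / (2 * real n))\<bar>"
    by (intro mult_mono mult_left_mono double abs_sin_ge_sym_res) auto
  also have "\<dots> = \<bar>sin_freq k - sin_freq ((k + n - d) mod n)\<bar>"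
    by (simp add: sin_freq_diff[OF assms(1,3)] abs_mult)
  finally show ?thesis .
qed

lemma sum_inverse_sym_res_mid_freq_le: "(\<Sum>k<n. 1 / \<bar>real_of_int (sym_res (mid_freq d k))\<bar>) \<le> 2 * (1 + ln (real n))"
proof -
  have "(\<Sum>k<n. 1 / \<bar>real_of_int (sym_res (mid_freq d k))\<bar>) \<le> 2 * harm n"
    using inj_on_sym_res_mid_freq sym_res_mid_freq_neq_0 abs_sym_res_le
    by (intro sum_inverse_abs_inj_le_2_harm) auto
  also have "\<dots> \<le> 2 * (1 + ln (real n))"
    using harm_le_1_plus_ln[of n] n_pos by simp
  finally show ?thesis .
qed

section \<open>Decay of the off-diagonal terms\<close>

lemma eigval_diff_ge_1:
  assumes "s \<noteq> s'"
  shows "1 \<le> norm (eigval k' s' - eigval k s)"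
proof -
  have "\<bar>Re (eigval k' s' - eigval k s)\<bar> = rho k' + rho k"
    using assms rho_ge_half[of k] rho_ge_half[of k'] by (cases s; cases s'; simp add: eigval_def)
  then show ?thesis
    using abs_Re_le_cmod[of "eigval k' s' - eigval k s"] rho_ge_half[of k] rho_ge_half[of k'] by linarith
qed

lemma eigval_diff_ge_sin_freq: "\<bar>sin_freq k - sin_freq k'\<bar> / sqrt 2 \<le> norm (eigval k' s - eigval k s)"
proof -
  have "Im (eigval k' s - eigval k s) = (sin_freq k - sin_freq k') / sqrt 2"
    by (simp add: eigval_def diff_divide_distrib)
  then have "\<bar>Im (eigval k' s - eigval k s)\<bar> = \<bar>sin_freq k - sin_freq k'\<bar> / sqrt 2"
    by simp
  then show ?thesis
    using abs_Im_le_cmod[of "eigval k' s - eigval k s"] by linarith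
qed

lemma norm_mode_step_coin_le_1: "norm (mode_step k (coin a) b) \<le> 1"
  unfolding mode_step_def coin_step_def
  by (cases a; cases b) (simp_all add: coin_def norm_mult norm_divide real_sqrt_ge_1_iff)

lemma norm_eigcomp_le_2: "norm (eigcomp a k s b) \<le> 2"
proof -
  have "norm (eigval k (\<not> s) * coin a b) \<le> 1"
    by (simp add: norm_mult coin_def)
  then have "norm (mode_step k (coin a) b - eigval k (\<not> s) * coin a b) \<le> 2"
    using norm_mode_step_coin_le_1[of k a b] norm_triangle_ineq4[of "mode_step k (coin a) b" "eigval k (\<not> s) * coin a b"]
    by linarith
  moreover have "1 \<le> norm (eigval k s - eigval k (\<not> s))"
    using eigval_diff_ge_1[of "\<not> s" s k k] by simp
  ultimately have "norm (eigcomp a k s b) \<le> 2 / 1"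
    unfolding eigcomp_def norm_divide by (intro frac_le) auto
  then show ?thesis by simp
qed

lemma norm_overlap_le_8: "norm (overlap a k s k' s') \<le> 8"
proof -
  have product_le: "norm (eigcomp a k s b * cnj (eigcomp a k' s' b)) \<le> 2 * 2" for b
    unfolding norm_mult complex_mod_cnj by (intro mult_mono norm_eigcomp_le_2) auto
  have "(\<Sum>b\<in>UNIV. norm (eigcomp a k s b * cnj (eigcomp a k' s' b))) \<le> 8"
    using add_mono[OF product_le[of True] product_le[of False]] by (simp add: UNIV_bool add.commute)
  then show ?thesis
    unfolding overlap_def by (rule order_trans[OF norm_sum])
qed

lemma norm_1_minus_phase: "norm (1 - phase k s k' s') = norm (eigval k' s' - eigval k s)"
proof -
  have "eigval k' s' * (1 - phase k s k' s') = eigval k' s' - eigval k s * (eigval k' s' * cnj (eigval k' s'))"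
    by (simp add: phase_def algebra_simps)
  then have "eigval k' s' * (1 - phase k s k' s') = eigval k' s' - eigval k s"
    by (simp add: eigval_mult_cnj)
  then show ?thesis
    by (metis norm_mult norm_eigval mult_1)
qed

lemma norm_offdiag_avg_le:
  assumes gap: "c \<le> norm (eigval k' s' - eigval k s)" and "0 < c" "1 \<le> T"
  shows "norm (offdiag_avg T k s k' s') \<le> 2 / (real T * c)"
proof -
  have dist: "c \<le> norm (1 - phase k s k' s')"
    using gap by (simp only: norm_1_minus_phase)
  then have "phase k s k' s' \<noteq> 1"
    using \<open>0 < c\<close> by auto
  then have "norm (geom_avg T (phase k s k' s')) \<le> 2 / (real T * norm (1 - phase k s k' s'))"
    using \<open>1 \<le> T\<close> by (intro norm_geom_avg_le) (simp_all add: phase_def norm_mult)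
  also have "\<dots> \<le> 2 / (real T * c)"
    using dist assms(2,3) by (intro divide_left_mono mult_left_mono mult_pos_pos) auto
  finally show ?thesis
    using assms(2,3) by (simp add: offdiag_avg_def)
qed

lemma norm_error_coeff_le:
  "norm (error_coeff a T k k') \<le> 8 * (\<Sum>s\<in>UNIV. \<Sum>s'\<in>UNIV. norm (offdiag_avg T k s k' s'))"
proof -
  have "norm (offdiag_avg T k s k' s' * overlap a k s k' s') \<le> 8 * norm (offdiag_avg T k s k' s')" for s s'
    using mult_left_mono[OF norm_overlap_le_8, of "norm (offdiag_avg T k s k' s')"]
    by (simp add: norm_mult mult.commute)
  then show ?thesis
    unfolding error_coeff_def sum_distrib_left
    by (intro order_trans[OF norm_sum] sum_mono order_trans[OF norm_sum]) auto
qed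

lemma norm_offdiag_avg_circ_le:
  assumes "k < n" "0 < d" "d < n" "1 \<le> T"
  shows "norm (offdiag_avg T k s ((k + n - d) mod n) s)
    \<le> 4 * (real n)\<^sup>2 / (real T * real (circ_dist d) * \<bar>real_of_int (sym_res (mid_freq d k))\<bar>)"
proof -
  define k' where "k' = (k + n - d) mod n"
  define D where "D = \<bar>sin_freq k - sin_freq k'\<bar>"
  define y where "y = \<bar>real_of_int (sym_res (mid_freq d k))\<bar>"
  define m where "m = real (circ_dist d) * y / (real n)\<^sup>2"
  have lower: "m \<le> D"
    using sin_freq_diff_ge[OF assms(1-3)] by (simp add: m_def D_def y_def k'_def)
  have "1 \<le> y" "1 \<le> real (circ_dist d)"
    using sym_res_mid_freq_neq_0[of d k] circ_dist_pos[OF assms(3)] by (simp_all add: y_def)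
  then have pos: "0 < m"
    using n_pos by (simp add: m_def)
  have "D / 2 \<le> D / sqrt 2"
    using sqrt2_less_2 by (intro divide_left_mono) (auto simp: D_def)
  then have "D / 2 \<le> norm (eigval k' s - eigval k s)"
    using eigval_diff_ge_sin_freq[of k k' s] unfolding D_def by linarith
  then have "norm (offdiag_avg T k s k' s) \<le> 2 / (real T * (D / 2))"
    using lower pos assms(4) by (intro norm_offdiag_avg_le) auto
  also have "\<dots> \<le> 2 / (real T * (m / 2))"
    using lower pos assms(4) by (intro divide_left_mono mult_left_mono mult_pos_pos) auto
  also have "\<dots> = 4 * (real n)\<^sup>2 / (real T * real (circ_dist d) * y)"
    using n_pos by (simp add: m_def field_simps)
  finally show ?thesis
    by (simp add: k'_def y_def)
qed

lemma norm_error_coeff_circ_le: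
  assumes "k < n" "d < n" "1 \<le> T"
  shows "norm (error_coeff a T k ((k + n - d) mod n)) \<le> 32 / real T +
    (if d = 0 then 0
     else 64 * (real n)\<^sup>2 / (real T * real (circ_dist d) * \<bar>real_of_int (sym_res (mid_freq d k))\<bar>))"
    (is "_ \<le> _ + ?V")
proof -
  define k' where "k' = (k + n - d) mod n"
  have cross: "norm (offdiag_avg T k s k' (\<not> s)) \<le> 2 / real T" for s
    using norm_offdiag_avg_le[OF eigval_diff_ge_1[of s "\<not> s" k' k]] assms(3) by simp
  have same: "norm (offdiag_avg T k s k' s) \<le> ?V / 16" for s
    using norm_offdiag_avg_circ_le[OF assms(1) _ assms(2,3), of s] assms(1)
    by (cases "d = 0") (simp_all add: k'_def offdiag_avg_def)
  have "norm (error_coeff a T k k') \<le> 8 * (\<Sum>s\<in>UNIV. \<Sum>s'\<in>UNIV. norm (offdiag_avg T k s k' s'))"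
    by (rule norm_error_coeff_le)
  also have "\<dots> \<le> 8 * (?V / 16 + 2 / real T + (2 / real T + ?V / 16))"
    using same[of True] same[of False] cross[of True] cross[of False]
    by (simp add: UNIV_bool)
  finally show ?thesis
    by (simp add: k'_def)
qed

lemma sum_norm_error_coeff_le:
  assumes "d < n" "1 \<le> T"
  shows "(\<Sum>k<n. norm (error_coeff a T k ((k + n - d) mod n)))
    \<le> 160 * (real n)\<^sup>2 * (1 + ln (real n)) / (real T * real (circ_dist d))"
proof -
  define L where "L = 1 + ln (real n)"
  define X where "X = (real n)\<^sup>2 * L / (real T * real (circ_dist d))"
  define V where "V k = (if d = 0 then 0
     else 64 * (real n)\<^sup>2 / (real T * real (circ_dist d) * \<bar>real_of_int (sym_res (mid_freq d k))\<bar>))" for k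
  have L: "1 \<le> L" using one_le_log_factor by (simp add: L_def)
  have dist: "1 \<le> real (circ_dist d)" "real (circ_dist d) \<le> real n"
    using circ_dist_pos[OF assms(1)] assms(1) by (auto simp: circ_dist_def)
  have X: "0 \<le> X" using L by (simp add: X_def)
  have "real n / real T \<le> X"
  proof -
    have "real n * real (circ_dist d) * 1 \<le> real n * real n * L"
      using dist L by (intro mult_mono) auto
    then show ?thesis
      using assms(2) dist by (simp add: X_def field_simps power2_eq_square)
  qed
  moreover have "(\<Sum>k<n. V k) \<le> 128 * X"
  proof (cases "d = 0")
    case False
    have "(\<Sum>k<n. V k) = 64 * (real n)\<^sup>2 / (real T * real (circ_dist d))
        * (\<Sum>k<n. 1 / \<bar>real_of_int (sym_res (mid_freq d k))\<bar>)"
      using False by (simp add: V_def sum_distrib_left)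
    also have "\<dots> \<le> 64 * (real n)\<^sup>2 / (real T * real (circ_dist d)) * (2 * L)"
      using sum_inverse_sym_res_mid_freq_le[of d] by (intro mult_left_mono) (auto simp: L_def)
    finally show ?thesis by (simp add: X_def)
  qed (use X in \<open>simp add: V_def\<close>)
  moreover have "(\<Sum>k<n. norm (error_coeff a T k ((k + n - d) mod n))) \<le> (\<Sum>k<n. 32 / real T + V k)"
    using norm_error_coeff_circ_le[OF _ assms] by (intro sum_mono) (simp add: V_def)
  moreover have "(\<Sum>k<n. 32 / real T + V k) = 32 * (real n / real T) + (\<Sum>k<n. V k)"
    by (simp add: sum.distrib)
  ultimately have "(\<Sum>k<n. norm (error_coeff a T k ((k + n - d) mod n))) \<le> 160 * X"
    by linarith
  then show ?thesis
    by (simp add: X_def L_def)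
qed

lemma sum_inverse_circ_dist_sq_le: "(\<Sum>d<n. 1 / (real (circ_dist d))\<^sup>2) \<le> 5"
proof -
  have reflect: "(\<Sum>d\<in>{1..<n}. 1 / (real (n - d))\<^sup>2) = (\<Sum>d\<in>{1..<n}. 1 / (real d)\<^sup>2)"
    by (rule sum.reindex_bij_witness[where i="\<lambda>d. n - d" and j="\<lambda>d. n - d"]) auto
  have "{1..<n} = {1..n - 1}"
    using n_pos by auto
  then have "(\<Sum>d\<in>{1..<n}. 1 / (real d)\<^sup>2) \<le> 2 - 1 / real (n - 1)"
    using n_ge_3 by (simp only:) (intro sum_inverse_squares_le, simp)
  moreover have "0 \<le> 1 / real (n - 1)"
    by simp
  ultimately have "(\<Sum>d\<in>{1..<n}. 1 / (real d)\<^sup>2) \<le> 2"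
    by (smt (verit))
  moreover have "(\<Sum>d\<in>{1..<n}. 1 / (real (circ_dist d))\<^sup>2)
      \<le> (\<Sum>d\<in>{1..<n}. 1 / (real d)\<^sup>2 + 1 / (real (n - d))\<^sup>2)"
    by (rule sum_mono) (auto simp: circ_dist_def min_def)
  moreover have "(\<Sum>d\<in>{1..<n}. 1 / (real d)\<^sup>2 + 1 / (real (n - d))\<^sup>2) = 2 * (\<Sum>d\<in>{1..<n}. 1 / (real d)\<^sup>2)"
    by (simp only: sum.distrib reflect mult_2)
  moreover have "(\<Sum>d<n. 1 / (real (circ_dist d))\<^sup>2) = 1 + (\<Sum>d\<in>{1..<n}. 1 / (real (circ_dist d))\<^sup>2)"
    using n_pos by (simp add: lessThan_atLeast0 sum.atLeast_Suc_lessThan circ_dist_def)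
  ultimately show ?thesis by linarith
qed

lemma sum_norm_error_term_le:
  assumes "1 \<le> T"
  shows "(\<Sum>j<n. norm (error_term a i T j)) \<le> 480 * real n * (1 + ln (real n)) / real T"
proof -
  define M where "M = 160 * (real n)\<^sup>2 * (1 + ln (real n)) / real T"
  have M: "0 \<le> M" using one_le_log_factor by (simp add: M_def)
  have "(\<Sum>j<n. norm (\<Sum>k<n. \<Sum>k'<n. omega ((int j - int i) * (int k - int k')) * error_coeff a T k k'))
      \<le> real n * sqrt (\<Sum>d<n. (M / real (circ_dist d))\<^sup>2)"
    using sum_norm_error_coeff_le[OF _ assms] by (intro sum_norm_fourier_le) (simp add: M_def)
  also have "(\<Sum>d<n. (M / real (circ_dist d))\<^sup>2) = M\<^sup>2 * (\<Sum>d<n. 1 / (real (circ_dist d))\<^sup>2)"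
    by (simp add: power_divide sum_distrib_left)
  also have "sqrt (M\<^sup>2 * (\<Sum>d<n. 1 / (real (circ_dist d))\<^sup>2)) \<le> sqrt (M\<^sup>2 * 5)"
    using sum_inverse_circ_dist_sq_le by (simp add: mult_left_mono)
  also have "\<dots> = M * sqrt 5"
    using M by (simp add: real_sqrt_mult)
  also have "\<dots> \<le> M * 3"
    using M real_le_lsqrt[of 3 5] by (intro mult_left_mono) auto
  finally have bound: "(\<Sum>j<n. norm (\<Sum>k<n. \<Sum>k'<n. omega ((int j - int i) * (int k - int k')) * error_coeff a T k k'))
      \<le> real n * (M * 3)"
    using n_pos by simp
  have "(\<Sum>j<n. norm (error_term a i T j))
      = (\<Sum>j<n. norm (\<Sum>k<n. \<Sum>k'<n. omega ((int j - int i) * (int k - int k')) * error_coeff a T k k')) / (real n)\<^sup>2"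
    unfolding error_term_def norm_divide norm_power norm_of_nat by (rule sum_divide_distrib[symmetric])
  also have "\<dots> \<le> real n * (M * 3) / (real n)\<^sup>2"
    using bound by (rule divide_right_mono) simp
  also have "\<dots> = 480 * real n * (1 + ln (real n)) / real T"
    using n_pos assms by (simp add: M_def power2_eq_square field_simps)
  finally show ?thesis .
qed

section \<open>The mixing time\<close>

lemma avg_prob_split:
  assumes "i < n" "j < n" "1 \<le> T"
  shows "avg_prob n a i T j = Re (limit_value a) + Re (error_term a i T j)"
  using arg_cong[OF of_real_avg_prob_split[OF assms], of Re] by simp

lemma norm_error_term_le:
  assumes "j < n" "1 \<le> T"
  shows "norm (error_term a i T j) \<le> 480 * real n * (1 + ln (real n)) / real T"
  by (rule order_trans[OF member_le_sum sum_norm_error_term_le[OF assms(2)]]) (use assms(1) in auto)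

lemma lim_dist_eq:
  assumes "i < n" "j < n"
  shows "lim_dist n a i j = Re (limit_value a)"
proof -
  define K where "K = 480 * real n * (1 + ln (real n))"
  have "norm (avg_prob n a i T j - Re (limit_value a)) \<le> K / real T" if "1 \<le> T" for T
  proof -
    have "norm (avg_prob n a i T j - Re (limit_value a)) \<le> norm (error_term a i T j)"
      using avg_prob_split[OF assms that] abs_Re_le_cmod by simp
    also have "\<dots> \<le> K / real T"
      unfolding K_def by (rule norm_error_term_le[OF assms(2) that])
    finally show ?thesis .
  qed
  then have "eventually (\<lambda>T. norm (avg_prob n a i T j - Re (limit_value a)) \<le> K / real T) sequentially"
    using eventually_ge_at_top[of 1] by (rule eventually_mono[rotated])
  then have "(\<lambda>T. avg_prob n a i T j - Re (limit_value a)) \<longlonglongrightarrow> 0"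
    using lim_const_over_n[of K] by (rule Lim_null_comparison)
  then show ?thesis
    unfolding lim_dist_def by (rule limI[OF LIM_zero_cancel])
qed

lemma tv_dist_le:
  assumes "i < n" "1 \<le> T"
  shows "tv_dist n (lim_dist n a i) (avg_prob n a i T) \<le> 480 * real n * (1 + ln (real n)) / real T"
proof -
  have "tv_dist n (lim_dist n a i) (avg_prob n a i T) = (\<Sum>j<n. \<bar>Re (error_term a i T j)\<bar>)"
    unfolding tv_dist_def using assms by (intro sum.cong) (simp_all add: lim_dist_eq avg_prob_split)
  also have "\<dots> \<le> (\<Sum>j<n. norm (error_term a i T j))"
    by (intro sum_mono abs_Re_le_cmod)
  also have "\<dots> \<le> 480 * real n * (1 + ln (real n)) / real T"
    by (rule sum_norm_error_term_le[OF assms(2)])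
  finally show ?thesis .
qed

lemma mixesI:
  assumes "0 < \<epsilon>" "480 * real n * (1 + ln (real n)) / \<epsilon> \<le> real T" "1 \<le> T"
  shows "mixes n \<epsilon> T"
  unfolding mixes_def
proof (intro allI impI)
  fix t a i assume "T \<le> t" "i < n"
  define K where "K = 480 * real n * (1 + ln (real n))"
  have "0 < 1 + ln (real n)"
    using one_le_log_factor by linarith
  then have "0 < K"
    using n_pos by (simp add: K_def)
  have "tv_dist n (lim_dist n a i) (avg_prob n a i t) \<le> K / real t"
    using tv_dist_le[OF \<open>i < n\<close>] \<open>T \<le> t\<close> assms(3) by (simp add: K_def)
  also have "\<dots> \<le> K / real T"
    using \<open>T \<le> t\<close> assms(3) \<open>0 < K\<close> by (intro divide_left_mono) auto
  also have "\<dots> \<le> \<epsilon>"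
    using assms \<open>0 < K\<close> by (simp add: K_def divide_le_eq pos_divide_le_eq mult.commute)
  finally show "tv_dist n (lim_dist n a i) (avg_prob n a i t) \<le> \<epsilon>" .
qed

end

lemma mixing_time_le:
  assumes "odd n" "3 \<le> n" "0 < \<epsilon>" "\<epsilon> < 1"
  shows "(\<exists>T\<ge>1. mixes n \<epsilon> T) \<and> real (mixing_time n \<epsilon>) \<le> 481 * real n * (1 + ln (real n)) / \<epsilon>"
proof -
  interpret hadamard_cycle n
    using assms by unfold_locales
  define L where "L = 1 + ln (real n)"
  define T where "T = nat \<lceil>480 * real n * L / \<epsilon>\<rceil>"
  have "1 * 1 \<le> real n * L"
    using n_pos one_le_log_factor by (intro mult_mono) (auto simp: L_def)
  then have nL: "1 \<le> real n * L / \<epsilon>"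
    using assms(3,4) by (simp add: field_simps)
  have T_ge: "480 * real n * L / \<epsilon> \<le> real T"
    unfolding T_def by linarith
  moreover have "0 < 480 * real n * L / \<epsilon>"
    using nL assms(3) by (simp add: field_simps)
  ultimately have "1 \<le> T"
    by simp
  then have "mixes n \<epsilon> T"
    using mixesI[OF assms(3)] T_ge by (simp add: L_def)
  moreover have "real (mixing_time n \<epsilon>) \<le> 481 * real n * (1 + ln (real n)) / \<epsilon>"
  proof -
    have "mixing_time n \<epsilon> \<le> T"
      unfolding mixing_time_def using \<open>mixes n \<epsilon> T\<close> \<open>1 \<le> T\<close> by (simp add: Least_le)
    moreover have "real T \<le> 480 * real n * L / \<epsilon> + 1"
      unfolding T_def using \<open>0 < 480 * real n * L / \<epsilon>\<close> by linarith
    moreover have "481 * real n * L / \<epsilon> = 480 * real n * L / \<epsilon> + real n * L / \<epsilon>"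
      by (simp add: field_simps)
    ultimately show ?thesis
      using nL unfolding L_def by linarith
  qed
  ultimately show ?thesis
    using \<open>1 \<le> T\<close> by blast
qed

theorem mainTheorem7:
  shows "\<exists>C>0. \<forall>n::nat. \<forall>\<epsilon>::real. odd n \<and> n \<ge> 3 \<and> 0 < \<epsilon> \<and> \<epsilon> < 1 \<longrightarrow>
           (\<exists>T\<ge>1. mixes n \<epsilon> T) \<and>
           real (mixing_time n \<epsilon>) \<le> C * real n * (1 + ln (real n)) / \<epsilon> ^ 3"
proof (rule exI[of _ 481], rule conjI)
  show "\<forall>n::nat. \<forall>\<epsilon>::real. odd n \<and> n \<ge> 3 \<and> 0 < \<epsilon> \<and> \<epsilon> < 1 \<longrightarrow>
           (\<exists>T\<ge>1. mixes n \<epsilon> T) \<and>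
           real (mixing_time n \<epsilon>) \<le> 481 * real n * (1 + ln (real n)) / \<epsilon> ^ 3"
  proof (intro allI impI)
    fix n :: nat and \<epsilon> :: real
    assume "odd n \<and> n \<ge> 3 \<and> 0 < \<epsilon> \<and> \<epsilon> < 1"
    then have "odd n" "3 \<le> n" "0 < \<epsilon>" "\<epsilon> < 1" by auto
    then obtain "\<exists>T\<ge>1. mixes n \<epsilon> T"
      and mixing: "real (mixing_time n \<epsilon>) \<le> 481 * real n * (1 + ln (real n)) / \<epsilon>"
      using mixing_time_le by blast
    have "\<epsilon> ^ 3 \<le> \<epsilon>"
      using \<open>0 < \<epsilon>\<close> \<open>\<epsilon> < 1\<close> by (simp add: power3_eq_cube mult_le_one)
    then have "481 * real n * (1 + ln (real n)) / \<epsilon> \<le> 481 * real n * (1 + ln (real n)) / \<epsilon> ^ 3"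
      using \<open>0 < \<epsilon>\<close> \<open>3 \<le> n\<close> by (intro divide_left_mono) auto
    with mixing \<open>\<exists>T\<ge>1. mixes n \<epsilon> T\<close> show "(\<exists>T\<ge>1. mixes n \<epsilon> T) \<and>
        real (mixing_time n \<epsilon>) \<le> 481 * real n * (1 + ln (real n)) / \<epsilon> ^ 3"
      by (meson order_trans)
  qed
qed simp

end
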